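(* Let $K$ be a field of characteristic $p>0$. Let $W_1,W_2$ be subfields of $K$ such that $(K,W_1,W_2)$ is a $2$-foliation on $K$, and let $W_3$ be a subfield of $W_2$ such that $(W_1,W_2,W_3)$ is a $2$-foliation on $W_1$. Then $(K,W_1,W_2,W_3)$ is a $3$-foliation on $K$.
   Context: For a field $F$ of characteristic $p$, a power tower on $F$ is a sequence of subfields $V_0,V_1,\ldots$ of $F$ with $V_j=V_i\cdot F^{p^j}$ whenever $j\le i$ ($\cdot$ = compositum in $F$). For a positive integer $n$, an $n$-foliation on $F$ is a chain of subfields $F=V_0\supseteq V_1\supseteq\cdots\supseteq V_n$ such that the sequence $V_0,V_1,\ldots,V_n,V_n,V_n,\ldots$ is a power tower on $F$ of length exactly $n$ (i.e. $n$ is the least integer with $V_N=V_n$ for all $N\ge n$) and $\dim_{V_{i+1}}(V_i)=\dim_{V_{j+1}}(V_j)$ for all $0\le i,j<n$. *)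

theory Defs
  imports Main "HOL-Library.Equipollence"
begin

text \<open>All fields considered are subfields (given as carrier sets) of an ambient
  field type 'a; the characteristic p is CHAR('a).\<close>

definition is_subfield :: "'a::field set \<Rightarrow> bool" where
  "is_subfield S \<longleftrightarrow> 0 \<in> S \<and> 1 \<in> S \<and>
     (\<forall>x\<in>S. \<forall>y\<in>S. x + y \<in> S \<and> x - y \<in> S \<and> x * y \<in> S) \<and>
     (\<forall>x\<in>S. x \<noteq> 0 \<longrightarrow> inverse x \<in> S)"

definition compositum :: "'a::field set \<Rightarrow> 'a set \<Rightarrow> 'a set" where
  "compositum A B = \<Inter> {S. is_subfield S \<and> A \<union> B \<subseteq> S}"

definition frob_pow :: "'a::field set \<Rightarrow> nat \<Rightarrow> 'a set" where
  "frob_pow F j = (\<lambda>x. x ^ (CHAR('a) ^ j)) ` F"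

definition lin_indep_over :: "'a::field set \<Rightarrow> 'a set \<Rightarrow> bool" where
  "lin_indep_over W B \<longleftrightarrow> (\<forall>S c. finite S \<and> S \<subseteq> B \<and> (\<forall>x\<in>S. c x \<in> W) \<and>
       (\<Sum>x\<in>S. c x * x) = 0 \<longrightarrow> (\<forall>x\<in>S. c x = 0))"

definition span_over :: "'a::field set \<Rightarrow> 'a set \<Rightarrow> 'a set" where
  "span_over W B = {(\<Sum>x\<in>S. c x * x) | S c. finite S \<and> S \<subseteq> B \<and> (\<forall>x\<in>S. c x \<in> W)}"

definition is_basis_over :: "'a::field set \<Rightarrow> 'a set \<Rightarrow> 'a set \<Rightarrow> bool" where
  "is_basis_over W V B \<longleftrightarrow> B \<subseteq> V \<and> lin_indep_over W B \<and> V \<subseteq> span_over W B"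

text \<open>dim_{W1} V1 = dim_{W2} V2 (as cardinals): they have equipollent bases.\<close>
definition same_dim :: "'a::field set \<Rightarrow> 'a set \<Rightarrow> 'a set \<Rightarrow> 'a set \<Rightarrow> bool" where
  "same_dim W1 V1 W2 V2 \<longleftrightarrow>
     (\<exists>B1 B2. is_basis_over W1 V1 B1 \<and> is_basis_over W2 V2 B2 \<and> B1 \<approx> B2)"

definition power_tower :: "'a::field set \<Rightarrow> (nat \<Rightarrow> 'a set) \<Rightarrow> bool" where
  "power_tower F V \<longleftrightarrow> (\<forall>i. is_subfield (V i) \<and> V i \<subseteq> F) \<and>
     (\<forall>i j. j \<le> i \<longrightarrow> V j = compositum (V i) (frob_pow F j))"

definition tower_length :: "(nat \<Rightarrow> 'a set) \<Rightarrow> nat \<Rightarrow> bool" where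
  "tower_length V n \<longleftrightarrow> (\<forall>N\<ge>n. V N = V n) \<and> (\<forall>m<n. \<not> (\<forall>N\<ge>m. V N = V m))"

definition foliation :: "'a::field set \<Rightarrow> nat \<Rightarrow> 'a set list \<Rightarrow> bool" where
  "foliation F n Vs \<longleftrightarrow> 0 < n \<and> length Vs = Suc n \<and> Vs ! 0 = F \<and>
     (\<forall>i<n. Vs ! Suc i \<subseteq> Vs ! i) \<and>
     power_tower F (\<lambda>k. Vs ! min k n) \<and>
     tower_length (\<lambda>k. Vs ! min k n) n \<and>
     (\<forall>i<n. \<forall>j<n. same_dim (Vs ! Suc i) (Vs ! i) (Vs ! Suc j) (Vs ! j))"

end

(* Write p = CHAR('a) and F^(j) for the set of (p^j)-th powers of F. Since x |-> x^(p^j) is a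
   ring homomorphism, the preimage of a subfield is a subfield, hence (A.B)^(j) <= A^(j).B^(j)
   for composita. Feeding W1 = W2.K^(1), K^(2) <= W2, W2 = W3.W1^(1) and W1^(2) <= W3 through
   this inclusion gives W2^(1) <= W3 and W1^(1) <= W3.K^(2); hence W2 = W3.K^(2),
   W1 = W3.K^(1) and K^(3) <= W1^(2) <= W3, so K, W1, W2, W3 is a power tower, of length 3
   because W3 /= W2. The three degrees agree because equality of dimensions is transitive,
   i.e. by the invariance of the cardinality of a basis: for finite bases this is the
   exchange lemma of HOL-Algebra, and if C is an infinite basis and B another one, the
   finite supports in B of the elements of C span, hence exhaust, B, so |B| <= |C|. *)

theory Submission
  imports Defs "HOL-Computational_Algebra.Primes" "HOL-Algebra.Embedded_Algebras"
    "HOL-Algebra.Algebraic_Closure_Type"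
begin

section \<open>Frobenius powers and composita\<close>

lemma is_subfield_power: "is_subfield S \<Longrightarrow> x \<in> S \<Longrightarrow> x ^ n \<in> S"
  by (induct n) (auto simp: is_subfield_def)

lemma is_subfield_preimage_Frobenius:
  assumes "CHAR('a::field) > 0" and "is_subfield (S :: 'a set)"
  shows "is_subfield {x. x ^ CHAR('a) ^ j \<in> S}"
proof -
  let ?q = "CHAR('a) ^ j"
  have add: "(x + y) ^ ?q = x ^ ?q + y ^ ?q" for x y :: 'a
    using freshmans_dream'[OF prime_CHAR_semidom[OF assms(1)]] by blast
  have diff: "(x - y) ^ ?q = x ^ ?q - y ^ ?q" for x y :: 'a
    using add[of "x - y" y] by (simp add: algebra_simps)
  have "?q > 0"
    using assms(1) by simp
  then show ?thesis
    using assms(2) unfolding is_subfield_def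
    by (auto simp: add diff power_mult_distrib power_inverse power_0_left)
qed

lemma frob_pow_0 [simp]: "frob_pow F 0 = F"
  unfolding frob_pow_def by simp

lemma frob_pow_frob_pow: "frob_pow (frob_pow F i) j = frob_pow F (i + j)"
  unfolding frob_pow_def image_image by (simp add: power_add power_mult)

lemma frob_pow_mono: "A \<subseteq> B \<Longrightarrow> frob_pow A j \<subseteq> frob_pow B j"
  unfolding frob_pow_def by (rule image_mono)

lemma frob_pow_subset: "is_subfield F \<Longrightarrow> frob_pow F j \<subseteq> F"
  unfolding frob_pow_def using is_subfield_power by blast

lemma frob_pow_antimono:
  assumes "is_subfield F" and "i \<le> j"
  shows "frob_pow F j \<subseteq> frob_pow F i"
proof -
  have "frob_pow F j = frob_pow (frob_pow F (j - i)) i"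
    using assms(2) by (simp add: frob_pow_frob_pow)
  also have "\<dots> \<subseteq> frob_pow F i"
    using frob_pow_subset[OF assms(1)] by (rule frob_pow_mono)
  finally show ?thesis .
qed

lemma is_subfield_compositum: "is_subfield (compositum A B)"
  unfolding compositum_def is_subfield_def by blast

lemma compositum_upper: "A \<subseteq> compositum A B" "B \<subseteq> compositum A B"
  unfolding compositum_def by auto

lemma compositum_least: "is_subfield S \<Longrightarrow> A \<subseteq> S \<Longrightarrow> B \<subseteq> S \<Longrightarrow> compositum A B \<subseteq> S"
  unfolding compositum_def by auto

lemma compositum_mono: "A \<subseteq> A' \<Longrightarrow> B \<subseteq> B' \<Longrightarrow> compositum A B \<subseteq> compositum A' B'"
  by (meson compositum_least compositum_upper is_subfield_compositum order_trans)

lemma compositum_eq_left: "is_subfield A \<Longrightarrow> B \<subseteq> A \<Longrightarrow> compositum A B = A"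
  by (simp add: compositum_least compositum_upper subset_antisym)

lemma compositum_eq_right: "is_subfield B \<Longrightarrow> A \<subseteq> B \<Longrightarrow> compositum A B = B"
  by (simp add: compositum_least compositum_upper subset_antisym)

lemma frob_pow_compositum:
  assumes "CHAR('a::field) > 0"
  shows "frob_pow (compositum A B) j \<subseteq> compositum (frob_pow A j) (frob_pow (B :: 'a set) j)"
proof -
  let ?C = "compositum (frob_pow A j) (frob_pow B j)"
  have "compositum A B \<subseteq> {x. x ^ CHAR('a) ^ j \<in> ?C}"
    using compositum_upper(1)[of "frob_pow A j" "frob_pow B j"]
      compositum_upper(2)[of "frob_pow B j" "frob_pow A j"]
    by (intro compositum_least is_subfield_preimage_Frobenius[OF assms] is_subfield_compositum)
      (auto simp: frob_pow_def)
  then show ?thesis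
    unfolding frob_pow_def by auto
qed

section \<open>Linear algebra over a subfield\<close>

lemma sum_in_span_over:
  "finite S \<Longrightarrow> S \<subseteq> B \<Longrightarrow> (\<And>x. x \<in> S \<Longrightarrow> c x \<in> W) \<Longrightarrow> (\<Sum>x\<in>S. c x * x) \<in> span_over W B"
  unfolding span_over_def by blast

lemma zero_in_span_over: "0 \<in> span_over W B"
  using sum_in_span_over[of "{}"] by simp

lemma span_over_base: "is_subfield W \<Longrightarrow> b \<in> B \<Longrightarrow> b \<in> span_over W B"
  using sum_in_span_over[of "{b}" B "\<lambda>_. 1" W] by (simp add: is_subfield_def)

lemma span_over_mono: "B \<subseteq> B' \<Longrightarrow> span_over W B \<subseteq> span_over W B'"
  unfolding span_over_def by blast

lemma span_over_smult:
  assumes "is_subfield W" and "a \<in> W" and "x \<in> span_over W B"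
  shows "a * x \<in> span_over W B"
proof -
  obtain S c where x: "x = (\<Sum>y\<in>S. c y * y)" "finite S" "S \<subseteq> B" "\<forall>y\<in>S. c y \<in> W"
    using assms(3) unfolding span_over_def by blast
  have "a * x = (\<Sum>y\<in>S. (a * c y) * y)"
    unfolding x(1) sum_distrib_left by (simp add: mult.assoc)
  also have "\<dots> \<in> span_over W B"
    using x(2-4) assms(1,2) by (intro sum_in_span_over) (auto simp: is_subfield_def)
  finally show ?thesis .
qed

lemma span_over_add:
  assumes "is_subfield W" and "x \<in> span_over W B" and "y \<in> span_over W B"
  shows "x + y \<in> span_over W B"
proof -
  obtain S c where x: "x = (\<Sum>z\<in>S. c z * z)" "finite S" "S \<subseteq> B" "\<forall>z\<in>S. c z \<in> W"
    using assms(2) unfolding span_over_def by blast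
  obtain T d where y: "y = (\<Sum>z\<in>T. d z * z)" "finite T" "T \<subseteq> B" "\<forall>z\<in>T. d z \<in> W"
    using assms(3) unfolding span_over_def by blast
  define c' where "c' z = (if z \<in> S then c z else 0)" for z
  define d' where "d' z = (if z \<in> T then d z else 0)" for z
  have "x = (\<Sum>z\<in>S \<union> T. c' z * z)"
    unfolding x(1) using x(2) y(2) by (intro sum.mono_neutral_cong_left) (auto simp: c'_def)
  moreover have "y = (\<Sum>z\<in>S \<union> T. d' z * z)"
    unfolding y(1) using x(2) y(2) by (intro sum.mono_neutral_cong_left) (auto simp: d'_def)
  ultimately have "x + y = (\<Sum>z\<in>S \<union> T. (c' z + d' z) * z)"
    by (simp add: distrib_right sum.distrib)
  also have "\<dots> \<in> span_over W B"
    using x(2-4) y(2-4) assms(1)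
    by (intro sum_in_span_over) (auto simp: c'_def d'_def is_subfield_def)
  finally show ?thesis .
qed

lemma span_over_sum:
  assumes "is_subfield W" and "finite S" and "S \<subseteq> span_over W B" and "\<forall>x\<in>S. c x \<in> W"
  shows "(\<Sum>x\<in>S. c x * x) \<in> span_over W B"
  using assms(2-4)
  by (induct S rule: finite_induct)
    (simp_all add: zero_in_span_over span_over_add[OF assms(1)] span_over_smult[OF assms(1)])

lemma span_over_subset_span_over:
  assumes "is_subfield W" and "A \<subseteq> span_over W B"
  shows "span_over W A \<subseteq> span_over W B"
  using span_over_sum[OF assms(1) _ subset_trans[OF _ assms(2)]] unfolding span_over_def by blast

lemma lin_indep_over_subset: "lin_indep_over W B \<Longrightarrow> B' \<subseteq> B \<Longrightarrow> lin_indep_over W B'"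
  unfolding lin_indep_over_def by blast

lemma lin_indep_over_span_over_mem:
  assumes "is_subfield W" and "lin_indep_over W B" and "b \<in> B" and "B' \<subseteq> B"
    and "b \<in> span_over W B'"
  shows "b \<in> B'"
proof (rule ccontr)
  assume "b \<notin> B'"
  obtain S c where b: "b = (\<Sum>z\<in>S. c z * z)" "finite S" "S \<subseteq> B'" "\<forall>z\<in>S. c z \<in> W"
    using assms(5) unfolding span_over_def by blast
  with \<open>b \<notin> B'\<close> have "b \<notin> S"
    by blast
  define c' where "c' = c(b := -1)"
  have "(\<Sum>z\<in>S. c' z * z) = (\<Sum>z\<in>S. c z * z)"
    using \<open>b \<notin> S\<close> by (intro sum.cong) (auto simp: c'_def)
  then have "(\<Sum>z\<in>insert b S. c' z * z) = - b + (\<Sum>z\<in>S. c z * z)"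
    using b(2) \<open>b \<notin> S\<close> by (simp add: c'_def)
  then have "(\<Sum>z\<in>insert b S. c' z * z) = 0"
    using b(1) by simp
  moreover have "-1 \<in> W"
    using assms(1) unfolding is_subfield_def by (metis diff_0)
  ultimately have "c' b = 0"
    using assms(2-4) b(2-4) unfolding lin_indep_over_def
    by (elim allE[of _ "insert b S"] allE[of _ c']) (auto simp: c'_def split: if_splits)
  then show False
    by (simp add: c'_def)
qed

(* The ambient field as a HOL-Algebra ring, to reuse the exchange lemma of Embedded_Algebras. *)
interpretation type_ring: ring "ring_of_type_algebra :: 'a::field ring"
  rewrites "carrier (ring_of_type_algebra :: 'a ring) = UNIV"
    and "monoid.mult (ring_of_type_algebra :: 'a ring) = (*)"
    and "ring.add (ring_of_type_algebra :: 'a ring) = (+)"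
    and "ring.zero (ring_of_type_algebra :: 'a ring) = 0"
    and "monoid.one (ring_of_type_algebra :: 'a ring) = 1"
  by (rule ring_from_type_algebra) (simp_all add: ring_of_type_algebra_def)

lemma subfield_ring_of_type_algebra:
  assumes "is_subfield (W :: 'a::field set)"
  shows "subfield W ring_of_type_algebra"
proof (rule field.subfieldI'[OF field_from_type_algebra])
  have "\<ominus>\<^bsub>ring_of_type_algebra\<^esub> h = - h" for h :: 'a
    by (rule type_ring.minus_equality) simp_all
  moreover have "- h \<in> W" if "h \<in> W" for h
    using assms that unfolding is_subfield_def by (metis diff_0)
  ultimately show "subring W ring_of_type_algebra"
    using assms by (intro type_ring.subringI) (auto simp: is_subfield_def)
  show "inv\<^bsub>ring_of_type_algebra\<^esub> k \<in> W" if "k \<in> W - {\<zero>\<^bsub>ring_of_type_algebra\<^esub>}" for k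
    using assms that type_ring.inv_char[of k "inverse k"]
    by (auto simp: is_subfield_def ring_of_type_algebra_def)
qed

lemma combine_in_span_over:
  "is_subfield W \<Longrightarrow> set Ks \<subseteq> W \<Longrightarrow> type_ring.combine Ks Us \<in> span_over W (set Us)"
proof (induct Ks Us rule: type_ring.combine.induct)
  case (1 k Ks u Us)
  then have "k * u \<in> span_over W (set (u # Us))"
    by (intro span_over_smult span_over_base) auto
  moreover have "type_ring.combine Ks Us \<in> span_over W (set (u # Us))"
    using 1 span_over_mono[of "set Us" "set (u # Us)" W] by auto
  ultimately show ?case
    using 1 by (simp add: span_over_add)
qed (simp_all add: zero_in_span_over)

lemma combine_map_eq_sum:
  "distinct us \<Longrightarrow> type_ring.combine (map f us) us = (\<Sum>u\<in>set us. f u * u)"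
  by (induct us) auto

lemma Span_eq_span_over:
  assumes "is_subfield W" and "distinct us"
  shows "type_ring.Span W us = span_over W (set us)"
proof -
  have Span: "type_ring.Span W us = {type_ring.combine Ks us | Ks. set Ks \<subseteq> W}"
    using type_ring.Span_eq_combine_set[OF subfield_ring_of_type_algebra[OF assms(1)]] by simp
  have "x \<in> type_ring.Span W us" if x_span: "x \<in> span_over W (set us)" for x
  proof -
    obtain S c where x: "x = (\<Sum>z\<in>S. c z * z)" "S \<subseteq> set us" "\<forall>z\<in>S. c z \<in> W"
      using x_span unfolding span_over_def by blast
    define f where "f u = (if u \<in> S then c u else 0)" for u
    have "x = (\<Sum>u\<in>set us. f u * u)"
      unfolding x(1) using x(2) by (intro sum.mono_neutral_cong_left) (auto simp: f_def)
    then have "x = type_ring.combine (map f us) us"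
      by (simp add: combine_map_eq_sum[OF assms(2)])
    moreover have "set (map f us) \<subseteq> W"
      using x(3) assms(1) unfolding f_def is_subfield_def by auto
    ultimately show ?thesis
      unfolding Span by blast
  qed
  then show ?thesis
    unfolding Span using combine_in_span_over[OF assms(1)] by blast
qed

lemma independent_if_lin_indep_over:
  assumes "is_subfield W"
  shows "distinct us \<Longrightarrow> lin_indep_over W (set us) \<Longrightarrow> type_ring.independent W us"
proof (induct us)
  case Nil
  then show ?case
    by simp
next
  case (Cons u us)
  have "u \<notin> span_over W (set us)"
    using lin_indep_over_span_over_mem[OF assms Cons.prems(2), of u "set us"] Cons.prems(1) by auto
  then have "u \<notin> type_ring.Span W us"
    using Span_eq_span_over[OF assms] Cons.prems(1) by simp
  moreover have "type_ring.independent W us"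
    using Cons lin_indep_over_subset[of W "set (u # us)" "set us"] by auto
  ultimately show ?case
    by (intro type_ring.li_Cons) auto
qed

lemma lin_indep_over_card_le:
  assumes "is_subfield W" and "finite S" and "lin_indep_over W S"
    and "finite B" and "lin_indep_over W B" and "S \<subseteq> span_over W B"
  shows "card S \<le> card B"
proof -
  obtain us where us: "set us = S" "distinct us"
    using finite_distinct_list[OF assms(2)] by blast
  obtain vs where vs: "set vs = B" "distinct vs"
    using finite_distinct_list[OF assms(4)] by blast
  have "length us \<le> length vs"
    using type_ring.independent_length_le[OF subfield_ring_of_type_algebra[OF assms(1)]
        independent_if_lin_indep_over[OF assms(1) us(2)] independent_if_lin_indep_over[OF assms(1) vs(2)]]
      us vs assms(3,5,6) Span_eq_span_over[OF assms(1) vs(2)] by auto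
  then show ?thesis
    using us vs distinct_card by metis
qed

lemma lin_indep_over_finite_card_le:
  assumes "is_subfield W" and "finite B" and "lin_indep_over W B"
    and "lin_indep_over W C" and "C \<subseteq> span_over W B"
  shows "finite C" and "card C \<le> card B"
proof -
  have le: "card S \<le> card B" if "finite S" "S \<subseteq> C" for S
    using lin_indep_over_card_le[OF assms(1) that(1) lin_indep_over_subset[OF assms(4) that(2)]
        assms(2,3)] that(2) assms(5) by blast
  show "finite C"
  proof (rule ccontr)
    assume "infinite C"
    then obtain S where "finite S" "card S = Suc (card B)" "S \<subseteq> C"
      using infinite_arbitrarily_large by blast
    with le show False
      by fastforce
  qed
  then show "card C \<le> card B"
    using le by blast
qed

lemma lin_indep_over_lepoll_infinite:
  includes cardinal_syntax
  assumes "is_subfield W" and "lin_indep_over W B" and "C \<subseteq> span_over W B"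
    and "B \<subseteq> span_over W C" and "infinite C"
  shows "lepoll B C"
proof -
  have "\<exists>S. finite S \<and> S \<subseteq> B \<and> c \<in> span_over W S" if "c \<in> C" for c
  proof -
    obtain S f where c: "c = (\<Sum>z\<in>S. f z * z)" "finite S" "S \<subseteq> B" "\<forall>z\<in>S. f z \<in> W"
      using assms(3) \<open>c \<in> C\<close> unfolding span_over_def by blast
    then show ?thesis
      using sum_in_span_over[of S S f W] by auto
  qed
  then obtain supp where supp: "\<And>c. c \<in> C \<Longrightarrow> finite (supp c) \<and> supp c \<subseteq> B \<and> c \<in> span_over W (supp c)"
    by metis
  define U where "U = (\<Union>c\<in>C. supp c)"
  have "C \<subseteq> span_over W U"
    using supp span_over_mono[of _ U W] unfolding U_def by blast
  then have "B \<subseteq> span_over W U"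
    using assms(4) span_over_subset_span_over[OF assms(1)] by blast
  moreover have "U \<subseteq> B"
    using supp unfolding U_def by blast
  ultimately have "B \<subseteq> U"
    using lin_indep_over_span_over_mem[OF assms(1,2)] by blast
  moreover have "lepoll U C"
    unfolding lepoll_def card_of_ordLeq U_def
  proof (rule card_of_UNION_ordLeq_infinite[OF assms(5) card_of_mono1[OF subset_refl]], intro ballI)
    fix c assume "c \<in> C"
    then have "lepoll (supp c) C"
      using supp finite_lepoll_infinite[OF assms(5)] by blast
    then show "|supp c| \<le>o |C|"
      unfolding lepoll_def card_of_ordLeq .
  qed
  ultimately show ?thesis
    using subset_imp_lepoll lepoll_trans by blast
qed

lemma is_basis_over_eqpoll:
  assumes "is_subfield W" and "is_basis_over W V B" and "is_basis_over W V C"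
  shows "B \<approx> C"
proof -
  have B: "lin_indep_over W B" "B \<subseteq> span_over W C" "C \<subseteq> span_over W B"
    using assms(2,3) unfolding is_basis_over_def by auto
  have C: "lin_indep_over W C"
    using assms(3) unfolding is_basis_over_def by auto
  show ?thesis
  proof (cases "finite B")
    case True
    then have "finite C" "card C \<le> card B"
      using lin_indep_over_finite_card_le[OF assms(1) True B(1) C B(3)] by auto
    moreover have "card B \<le> card C"
      using lin_indep_over_finite_card_le[OF assms(1) \<open>finite C\<close> C B(1,2)] by auto
    ultimately show ?thesis
      using True eqpoll_iff_card by (metis le_antisym)
  next
    case False
    then have "infinite C"
      using lin_indep_over_finite_card_le(1)[OF assms(1) _ C B(1,2)] by blast
    then have "lepoll B C"
      using lin_indep_over_lepoll_infinite[OF assms(1) B(1,3,2)] by blast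
    moreover have "lepoll C B"
      using lin_indep_over_lepoll_infinite[OF assms(1) C B(2,3) False] .
    ultimately show ?thesis
      by (rule lepoll_antisym)
  qed
qed

lemma same_dim_sym: "same_dim W1 V1 W2 V2 \<Longrightarrow> same_dim W2 V2 W1 V1"
  unfolding same_dim_def by (meson eqpoll_sym)

lemma same_dim_refl: "same_dim W1 V1 W2 V2 \<Longrightarrow> same_dim W1 V1 W1 V1"
  unfolding same_dim_def by blast

lemma same_dim_trans:
  assumes "is_subfield W2" and "same_dim W1 V1 W2 V2" and "same_dim W2 V2 W3 V3"
  shows "same_dim W1 V1 W3 V3"
  using assms is_basis_over_eqpoll unfolding same_dim_def by (meson eqpoll_trans)

section \<open>Power towers and foliations\<close>

lemma power_towerI:
  assumes "\<And>i. is_subfield (V i)" and "antimono V" and "V 0 = F"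
    and "\<And>N. n \<le> N \<Longrightarrow> V N = V n"
    and "\<And>j. j \<le> n \<Longrightarrow> V j = compositum (V n) (frob_pow F j)"
  shows "power_tower F V"
  unfolding power_tower_def
proof (intro conjI allI impI)
  fix i
  show "is_subfield (V i)"
    by fact
  show "V i \<subseteq> F"
    using antimonoD[OF assms(2), of 0 i] assms(3) by simp
next
  fix i j :: nat
  assume "j \<le> i"
  show "V j = compositum (V i) (frob_pow F j)"
  proof (cases "j \<le> n")
    case True
    have Vj: "V j = compositum (V n) (frob_pow F j)"
      by (rule assms(5)[OF True])
    have "V n \<subseteq> V i"
    proof (cases "i \<le> n")
      case False
      then show ?thesis
        using assms(4)[of i] by simp
    qed (rule antimonoD[OF assms(2)])
    then have "V j \<subseteq> compositum (V i) (frob_pow F j)"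
      unfolding Vj by (rule compositum_mono) simp
    moreover have "frob_pow F j \<subseteq> V j"
      by (subst Vj) (rule compositum_upper(2))
    then have "compositum (V i) (frob_pow F j) \<subseteq> V j"
      using assms(1) antimonoD[OF assms(2) \<open>j \<le> i\<close>] by (intro compositum_least) auto
    ultimately show ?thesis
      by (rule antisym)
  next
    case False
    then have "V j = V n" "V i = V n"
      using \<open>j \<le> i\<close> assms(4)[of j] assms(4)[of i] by auto
    have Vn: "V n = compositum (V n) (frob_pow F n)"
      by (rule assms(5)) simp
    have "frob_pow F j \<subseteq> frob_pow F n"
      using False assms(1)[of 0] assms(3) by (intro frob_pow_antimono) auto
    also have "\<dots> \<subseteq> V n"
      by (subst Vn) (rule compositum_upper(2))
    finally show ?thesis
      using \<open>V j = V n\<close> \<open>V i = V n\<close> assms(1) by (simp add: compositum_eq_left)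
  qed
qed

lemma tower_length_SucI:
  assumes "antimono V" and "\<And>N. Suc m \<le> N \<Longrightarrow> V N = V (Suc m)" and "V (Suc m) \<noteq> V m"
  shows "tower_length V (Suc m)"
  unfolding tower_length_def
proof (intro conjI allI impI)
  fix k
  assume "k < Suc m"
  then have "V (Suc m) \<subseteq> V m" "V m \<subseteq> V k"
    using antimonoD[OF assms(1), of m "Suc m"] antimonoD[OF assms(1), of k m] by simp_all
  with assms(3) have "V (Suc m) \<noteq> V k"
    by blast
  then show "\<not> (\<forall>N\<ge>k. V N = V k)"
    using \<open>k < Suc m\<close> less_imp_le by blast
qed (use assms(2) in blast)

lemma tower_length_SucD:
  assumes "tower_length V (Suc m)"
  shows "V (Suc m) \<noteq> V m"
proof -
  obtain N where "m \<le> N" "V N \<noteq> V m"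
    using assms unfolding tower_length_def by blast
  moreover have "V N = V (Suc m)" if "N \<noteq> m"
    using assms \<open>m \<le> N\<close> that unfolding tower_length_def by (metis Suc_leI le_neq_implies_less)
  ultimately show ?thesis
    by fastforce
qed

lemma foliationD:
  assumes "foliation F n Vs"
  shows "j \<le> n \<Longrightarrow> Vs ! j = compositum (Vs ! n) (frob_pow F j)"
    and "i < n \<Longrightarrow> Vs ! Suc i \<subseteq> Vs ! i"
    and "Vs ! n \<noteq> Vs ! (n - 1)"
    and "i < n \<Longrightarrow> j < n \<Longrightarrow> same_dim (Vs ! Suc i) (Vs ! i) (Vs ! Suc j) (Vs ! j)"
proof -
  define V where "V = (\<lambda>k. Vs ! min k n)"
  have tower: "power_tower F V" and length: "tower_length V n" and "0 < n"
    using assms unfolding foliation_def V_def by auto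
  show "Vs ! j = compositum (Vs ! n) (frob_pow F j)" if "j \<le> n"
    using tower that unfolding power_tower_def V_def by (metis min.idem min_absorb1)
  from \<open>0 < n\<close> obtain m where "n = Suc m"
    using gr0_conv_Suc by blast
  then show "Vs ! n \<noteq> Vs ! (n - 1)"
    using tower_length_SucD[of V m] length unfolding V_def by simp
  show "i < n \<Longrightarrow> Vs ! Suc i \<subseteq> Vs ! i"
    using assms unfolding foliation_def by blast
  show "i < n \<Longrightarrow> j < n \<Longrightarrow> same_dim (Vs ! Suc i) (Vs ! i) (Vs ! Suc j) (Vs ! j)"
    using assms unfolding foliation_def by blast
qed

lemma foliationI:
  assumes "0 < n" and "length Vs = Suc n" and "Vs ! 0 = F"
    and "\<And>i. i \<le> n \<Longrightarrow> is_subfield (Vs ! i)"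
    and "\<And>i. i < n \<Longrightarrow> Vs ! Suc i \<subseteq> Vs ! i"
    and "Vs ! n \<noteq> Vs ! (n - 1)"
    and "\<And>j. 0 < j \<Longrightarrow> j \<le> n \<Longrightarrow> Vs ! j = compositum (Vs ! n) (frob_pow F j)"
    and "\<And>i. i < n \<Longrightarrow> same_dim (Vs ! Suc i) (Vs ! i) (Vs ! 1) (Vs ! 0)"
  shows "foliation F n Vs"
proof -
  define V where "V = (\<lambda>k. Vs ! min k n)"
  have subfield: "is_subfield (V k)" for k
    using assms(4) unfolding V_def by simp
  have "V (Suc k) \<subseteq> V k" for k
    using assms(5)[of k] unfolding V_def by (cases "k < n") auto
  then have anti: "antimono V"
    unfolding antimono_iff_le_Suc by blast
  have stable: "\<And>N. n \<le> N \<Longrightarrow> V N = V n"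
    unfolding V_def by simp
  have V0: "V 0 = F"
    using assms(3) unfolding V_def by simp
  have "V n \<subseteq> F"
    using antimonoD[OF anti, of 0 n] V0 by simp
  have tower: "V j = compositum (V n) (frob_pow F j)" if "j \<le> n" for j
  proof (cases "j = 0")
    case True
    then show ?thesis
      using V0 subfield[of 0] \<open>V n \<subseteq> F\<close> by (simp add: compositum_eq_right)
  next
    case False
    then show ?thesis
      using assms(7)[of j] that unfolding V_def by simp
  qed
  have "power_tower F V"
    by (rule power_towerI[OF subfield anti V0 stable tower])
  moreover have "tower_length V n"
  proof -
    obtain m where n: "n = Suc m"
      using assms(1) gr0_conv_Suc by blast
    have "V (Suc m) \<noteq> V m"
      using assms(6) unfolding V_def n by simp
    moreover have "V N = V (Suc m)" if "Suc m \<le> N" for N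
      using stable[of N] that unfolding n by simp
    ultimately show ?thesis
      unfolding n using tower_length_SucI[OF anti] by blast
  qed
  moreover have "same_dim (Vs ! Suc i) (Vs ! i) (Vs ! Suc j) (Vs ! j)" if "i < n" "j < n" for i j
    using same_dim_trans[OF assms(4) assms(8)[OF that(1)] same_dim_sym[OF assms(8)[OF that(2)]]]
      assms(1) by simp
  ultimately show ?thesis
    using assms(1-3,5) unfolding foliation_def V_def[symmetric] by blast
qed

section \<open>Extending a 2-foliation by one step\<close>

lemma compositum_tower_extend:
  fixes K W1 W2 W3 :: "'a::field set"
  assumes "CHAR('a) > 0" and "is_subfield W1" and "is_subfield W2" and "is_subfield W3"
    and "W1 \<subseteq> K" and "W3 \<subseteq> W2"
    and tower_K1: "W1 = compositum W2 (frob_pow K 1)" and tower_K2: "frob_pow K 2 \<subseteq> W2"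
    and tower_W1: "W2 = compositum W3 (frob_pow W1 1)" and tower_W2: "frob_pow W1 2 \<subseteq> W3"
  shows "W2 = compositum W3 (frob_pow K 2)"
    and "W1 = compositum W3 (frob_pow K 1)"
    and "frob_pow K 3 \<subseteq> W3"
proof -
  have "frob_pow W2 1 \<subseteq> compositum (frob_pow W3 1) (frob_pow (frob_pow W1 1) 1)"
    by (subst tower_W1) (rule frob_pow_compositum[OF assms(1)])
  also have "\<dots> \<subseteq> W3"
    using frob_pow_subset[OF assms(4)] tower_W2
    by (intro compositum_least assms(4)) (simp_all add: frob_pow_frob_pow numeral_2_eq_2)
  finally have W2_frob: "frob_pow W2 1 \<subseteq> W3" .
  have "frob_pow W1 1 \<subseteq> compositum (frob_pow W2 1) (frob_pow (frob_pow K 1) 1)"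
    by (subst tower_K1) (rule frob_pow_compositum[OF assms(1)])
  also have "\<dots> \<subseteq> compositum W3 (frob_pow K 2)"
    using W2_frob by (rule compositum_mono) (simp add: frob_pow_frob_pow numeral_2_eq_2)
  finally have W1_frob: "frob_pow W1 1 \<subseteq> compositum W3 (frob_pow K 2)" .
  have "W2 \<subseteq> compositum W3 (frob_pow K 2)"
    using W1_frob
    by (subst tower_W1) (intro compositum_least is_subfield_compositum compositum_upper(1))
  moreover have "compositum W3 (frob_pow K 2) \<subseteq> W2"
    using assms(3,6) tower_K2 by (rule compositum_least)
  ultimately show "W2 = compositum W3 (frob_pow K 2)"
    by (rule antisym)
  have "W2 \<subseteq> compositum W3 (frob_pow K 1)"
    by (subst tower_W1) (intro compositum_mono order_refl frob_pow_mono assms(5))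
  then have "W1 \<subseteq> compositum W3 (frob_pow K 1)"
    by (subst tower_K1) (intro compositum_least is_subfield_compositum compositum_upper(2))
  moreover have "W2 \<subseteq> W1" and "frob_pow K 1 \<subseteq> W1"
    by (subst tower_K1, rule compositum_upper)+
  then have "compositum W3 (frob_pow K 1) \<subseteq> W1"
    using assms(2,6) by (intro compositum_least) auto
  ultimately show "W1 = compositum W3 (frob_pow K 1)"
    by (rule antisym)
  have "frob_pow K 3 = frob_pow (frob_pow K 1) 2"
    by (simp add: frob_pow_frob_pow numeral_3_eq_3 numeral_2_eq_2)
  also have "\<dots> \<subseteq> frob_pow W1 2"
    using \<open>frob_pow K 1 \<subseteq> W1\<close> by (rule frob_pow_mono)
  finally show "frob_pow K 3 \<subseteq> W3"
    using tower_W2 by blast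
qed

theorem mainTheorem13:
  fixes K W1 W2 W3 :: "'a::field set"
  assumes "CHAR('a) > 0"
    and "is_subfield K"
    and "is_subfield W1" and "is_subfield W2" and "is_subfield W3"
    and "W1 \<subseteq> K" and "W2 \<subseteq> K" and "W3 \<subseteq> W2"
    and "foliation K 2 [K, W1, W2]"
    and "foliation W1 2 [W1, W2, W3]"
  shows "foliation K 3 [K, W1, W2, W3]"
proof -
  have tower_K1: "W1 = compositum W2 (frob_pow K 1)" and "W2 = compositum W2 (frob_pow K 2)"
    using foliationD(1)[OF assms(9), of 1] foliationD(1)[OF assms(9), of 2] by simp_all
  then have tower_K2: "frob_pow K 2 \<subseteq> W2"
    by (metis compositum_upper(2))
  have tower_W1: "W2 = compositum W3 (frob_pow W1 1)" and "W3 = compositum W3 (frob_pow W1 2)"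
    using foliationD(1)[OF assms(10), of 1] foliationD(1)[OF assms(10), of 2] by simp_all
  then have tower_W2: "frob_pow W1 2 \<subseteq> W3"
    by (metis compositum_upper(2))
  note tower = compositum_tower_extend[OF assms(1,3-6,8) tower_K1 tower_K2 tower_W1 tower_W2]
  have "W2 \<subseteq> W1" and "W3 \<noteq> W2"
    using foliationD(2)[OF assms(9), of 1] foliationD(3)[OF assms(10)] by simp_all
  have d01: "same_dim W1 K W2 W1" and d12: "same_dim W2 W1 W3 W2"
    using foliationD(4)[OF assms(9), of 0 1] foliationD(4)[OF assms(10), of 0 1] by simp_all
  note dims = same_dim_refl[OF d01] same_dim_sym[OF d01]
    same_dim_sym[OF same_dim_trans[OF assms(4) d01 d12]]
  show ?thesis
  proof (rule foliationI)
    fix j :: nat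
    assume "0 < j" and "j \<le> 3"
    then consider "j = 1" | "j = 2" | "j = 3"
      by linarith
    then show "[K, W1, W2, W3] ! j = compositum ([K, W1, W2, W3] ! 3) (frob_pow K j)"
      by cases (use tower compositum_eq_left[OF assms(5) tower(3)] in simp_all)
  qed (use assms(2-6,8) \<open>W2 \<subseteq> W1\<close> \<open>W3 \<noteq> W2\<close> dims in
      \<open>auto simp: less_Suc_eq le_Suc_eq numeral_3_eq_3\<close>)
qed

end
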